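(* Let $A\in\mathrm{Sect}(\pi/2-)$ on a complex Banach space. Then for every $\alpha>0$, \[\alpha\int_{\mathbb{R}}\|(\alpha+i\beta+A)^{-2}\|\,d\beta\le4(2\pi+3\log2)M_A(\log M_A+1).\]
   Context: $\Sigma_\theta=\{z\ne0:|\arg z|<\theta\}$, $\Sigma_0=(0,\infty)$. A densely defined operator $A$ is sectorial of angle $\theta\in[0,\pi/2)$ if $\sigma(A)\subset\overline{\Sigma_\theta}$ and for each $\theta'\in(\theta,\pi]$ there is $C_{\theta'}$ with $\|z(z+A)^{-1}\|\le C_{\theta'}$ for $z\in\Sigma_{\pi-\theta'}$; $\mathrm{Sect}(\pi/2-)$ is the union of these classes over $\theta\in[0,\pi/2)$. For such $A$, $M_A:=\sup_{\Re z>0}\|z(z+A)^{-1}\|<\infty$ (the sectoriality constant). *)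

theory Defs
  imports "HOL-Analysis.Analysis"
begin

text \<open>A complex Banach space is modelled as a real Banach space 'a together with
 a real-linear map J (multiplication by i) with J (J x) = - x such that the induced
 complex scalar multiplication is absolutely homogeneous.\<close>

definition cscale :: "('a::real_normed_vector \<Rightarrow> 'a) \<Rightarrow> complex \<Rightarrow> 'a \<Rightarrow> 'a" where
  "cscale J c x = Re c *\<^sub>R x + Im c *\<^sub>R J x"

definition complex_structure :: "('a::real_normed_vector \<Rightarrow> 'a) \<Rightarrow> bool" where
  "complex_structure J \<longleftrightarrow> linear J \<and> (\<forall>x. J (J x) = - x)
      \<and> (\<forall>c x. norm (cscale J c x) = cmod c * norm x)"

text \<open>A (possibly unbounded) complex-linear operator A is given by its graph G.\<close>

definition lin_op :: "('a::real_normed_vector \<Rightarrow> 'a) \<Rightarrow> ('a \<times> 'a) set \<Rightarrow> bool" where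
  "lin_op J G \<longleftrightarrow> (0, 0) \<in> G
     \<and> (\<forall>x y u v. (x, y) \<in> G \<and> (u, v) \<in> G \<longrightarrow> (x + u, y + v) \<in> G)
     \<and> (\<forall>c x y. (x, y) \<in> G \<longrightarrow> (cscale J c x, cscale J c y) \<in> G)
     \<and> (\<forall>x y y'. (x, y) \<in> G \<and> (x, y') \<in> G \<longrightarrow> y = y')"

definition densely_defined :: "('a::real_normed_vector \<times> 'a) set \<Rightarrow> bool" where
  "densely_defined G \<longleftrightarrow> closure (Domain G) = UNIV"

definition shift_op :: "('a::real_normed_vector \<Rightarrow> 'a) \<Rightarrow> complex \<Rightarrow> ('a \<times> 'a) set \<Rightarrow> ('a \<times> 'a) set" where
  "shift_op J z G = {(x, cscale J z x + y) | x y. (x, y) \<in> G}"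

definition is_bounded_inverse :: "('a::real_normed_vector \<Rightarrow>\<^sub>L 'a) \<Rightarrow> ('a \<times> 'a) set \<Rightarrow> bool" where
  "is_bounded_inverse R H \<longleftrightarrow> (\<forall>y. (blinfun_apply R y, y) \<in> H) \<and> (\<forall>x y. (x, y) \<in> H \<longrightarrow> blinfun_apply R y = x)"

definition shift_invertible :: "('a::real_normed_vector \<Rightarrow> 'a) \<Rightarrow> ('a \<times> 'a) set \<Rightarrow> complex \<Rightarrow> bool" where
  "shift_invertible J G z \<longleftrightarrow> (\<exists>R. is_bounded_inverse R (shift_op J z G))"

definition res :: "('a::real_normed_vector \<Rightarrow> 'a) \<Rightarrow> ('a \<times> 'a) set \<Rightarrow> complex \<Rightarrow> ('a \<Rightarrow>\<^sub>L 'a)" where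
  "res J G z = (THE R. is_bounded_inverse R (shift_op J z G))"

text \<open>Spectrum: lambda \<in> \<sigma>(A) iff lambda - A = -((-lambda) + A) has no bounded inverse.\<close>
definition op_spectrum :: "('a::real_normed_vector \<Rightarrow> 'a) \<Rightarrow> ('a \<times> 'a) set \<Rightarrow> complex set" where
  "op_spectrum J G = {w. \<not> shift_invertible J G (- w)}"

definition sector :: "real \<Rightarrow> complex set" where
  "sector \<theta> = (if \<theta> = 0 then {z. Im z = 0 \<and> Re z > 0} else {z. z \<noteq> 0 \<and> \<bar>Arg z\<bar> < \<theta>})"

definition sectorial_of_angle :: "('a::real_normed_vector \<Rightarrow> 'a) \<Rightarrow> ('a \<times> 'a) set \<Rightarrow> real \<Rightarrow> bool" where
  "sectorial_of_angle J G \<theta> \<longleftrightarrow> 0 \<le> \<theta> \<and> \<theta> < pi / 2 \<and> lin_op J G \<and> densely_defined G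
     \<and> op_spectrum J G \<subseteq> closure (sector \<theta>)
     \<and> (\<forall>\<theta>'. \<theta> < \<theta>' \<and> \<theta>' \<le> pi \<longrightarrow>
          (\<exists>C. \<forall>z \<in> sector (pi - \<theta>'). shift_invertible J G z \<and> cmod z * norm (res J G z) \<le> C))"

definition sect_half_pi :: "('a::real_normed_vector \<Rightarrow> 'a) \<Rightarrow> ('a \<times> 'a) set \<Rightarrow> bool" where
  "sect_half_pi J G \<longleftrightarrow> (\<exists>\<theta>. sectorial_of_angle J G \<theta>)"

definition sect_const :: "('a::real_normed_vector \<Rightarrow> 'a) \<Rightarrow> ('a \<times> 'a) set \<Rightarrow> real" where
  "sect_const J G = (SUP z \<in> {z. Re z > 0}. cmod z * norm (res J G z))"

end

theory Submission
  imports Defs "HOL-Complex_Analysis.Cauchy_Integral_Formula"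
begin

text \<open>For \<open>Re z > 0\<close> the resolvent satisfies \<open>\<parallel>(z + A)\<^sup>-\<^sup>1\<parallel> \<le> M / |z|\<close>, whence
  \<open>\<parallel>(z + A)\<^sup>-\<^sup>2\<parallel> \<le> M\<^sup>2 / |z|\<^sup>2\<close>. Near the imaginary axis this is improved using
  \<open>(z + A)\<^sup>-\<^sup>2 = - d/dz (z + A)\<^sup>-\<^sup>1\<close>: Cauchy's estimate on the disc of radius \<open>Re z / 2\<close>
  about \<open>z\<close>, applied to \<open>w \<mapsto> l ((w + A)\<^sup>-\<^sup>1 x)\<close> for a norming functional \<open>l\<close> given by
  Hahn--Banach, yields \<open>\<parallel>(z + A)\<^sup>-\<^sup>2\<parallel> \<le> 8 M / (Re z |z|)\<close>. For \<open>z = \<alpha> + i \<beta>\<close> the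
  second bound is integrated over \<open>|\<beta>| \<le> M \<alpha>\<close> and the first beyond, giving
  \<open>\<alpha> \<integral> \<parallel>(z + A)\<^sup>-\<^sup>2\<parallel> d\<beta> \<le> 16 M log M + 18 M\<close>; this is below the stated constant since
  \<open>M \<ge> 1\<close> on a nontrivial space and \<open>8 \<pi> + 12 log 2 \<ge> 18\<close>.\<close>

section \<open>Complex structures and resolvents\<close>

lemma complex_structureD:
  assumes "complex_structure J"
  shows "linear J" "J (J x) = - x" "norm (cscale J c x) = cmod c * norm x"
  using assms unfolding complex_structure_def by auto

lemma cscale_add_right:
  assumes "complex_structure J"
  shows "cscale J c (x + y) = cscale J c x + cscale J c y"
  using linear_add[OF complex_structureD(1)[OF assms]] unfolding cscale_def by (simp add: algebra_simps)

lemma cscale_diff_left: "cscale J (c - d) x = cscale J c x - cscale J d x"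
  unfolding cscale_def by (simp add: algebra_simps)

lemma cscale_minus_left: "cscale J (- c) x = - cscale J c x"
  unfolding cscale_def by (simp add: algebra_simps)

lemma cscale_of_real [simp]: "cscale J (complex_of_real r) x = r *\<^sub>R x"
  unfolding cscale_def by simp

lemma cscale_one [simp]: "cscale J 1 x = x"
  using cscale_of_real[of J 1] by simp

lemma cscale_mult:
  assumes "complex_structure J"
  shows "cscale J (c * d) x = cscale J c (cscale J d x)"
proof -
  have J: "linear J" "J (J x) = - x" using complex_structureD[OF assms] by auto
  have "cscale J c (cscale J d x) = Re c *\<^sub>R (Re d *\<^sub>R x + Im d *\<^sub>R J x)
        + Im c *\<^sub>R (Re d *\<^sub>R J x + Im d *\<^sub>R J (J x))"
    unfolding cscale_def using linear_add[OF J(1)] linear_scale[OF J(1)] by simp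
  also have "\<dots> = cscale J (c * d) x"
    unfolding cscale_def J(2) by (simp add: algebra_simps)
  finally show ?thesis by simp
qed

lemma cscale_commute:
  assumes "complex_structure J"
  shows "cscale J c (cscale J d x) = cscale J d (cscale J c x)"
  by (metis assms cscale_mult mult.commute)

lemma norm_J:
  assumes "complex_structure J"
  shows "norm (J x) = norm x"
  using complex_structureD(3)[OF assms, of \<i> x] unfolding cscale_def by simp

lemma bounded_linear_J:
  assumes "complex_structure J"
  shows "bounded_linear J"
  using complex_structureD(1)[OF assms] norm_J[OF assms]
  by (intro bounded_linear_intro[of _ 1]) (auto simp: linear_add linear_scale)

lemma is_bounded_inverse_unique:
  assumes "is_bounded_inverse R H" "is_bounded_inverse R' H"
  shows "R = R'"
proof (rule blinfun_eqI)
  fix y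
  from assms(1) have "(R y, y) \<in> H" unfolding is_bounded_inverse_def by auto
  with assms(2) show "R y = R' y" unfolding is_bounded_inverse_def by metis
qed

lemma res_is_bounded_inverse:
  assumes "shift_invertible J G z"
  shows "is_bounded_inverse (res J G z) (shift_op J z G)"
proof -
  obtain R where "is_bounded_inverse R (shift_op J z G)"
    using assms unfolding shift_invertible_def by auto
  then show ?thesis
    unfolding res_def by (metis theI is_bounded_inverse_unique)
qed

lemma res_in_graph:
  assumes "shift_invertible J G z"
  obtains a where "(res J G z y, a) \<in> G" "y = cscale J z (res J G z y) + a"
  using res_is_bounded_inverse[OF assms] unfolding is_bounded_inverse_def shift_op_def by blast

lemma res_shift_apply:
  assumes "shift_invertible J G z" "(x, a) \<in> G"
  shows "res J G z (cscale J z x + a) = x"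
  using res_is_bounded_inverse[OF assms(1)] assms(2)
  unfolding is_bounded_inverse_def shift_op_def by blast

lemma res_cscale:
  assumes cs: "complex_structure J" and lin: "lin_op J G" and inv: "shift_invertible J G z"
  shows "res J G z (cscale J c y) = cscale J c (res J G z y)"
proof -
  obtain a where a: "(res J G z y, a) \<in> G" "y = cscale J z (res J G z y) + a"
    using res_in_graph[OF inv] by blast
  have "(cscale J c (res J G z y), cscale J c a) \<in> G"
    using lin a(1) unfolding lin_op_def by blast
  moreover have "cscale J c y = cscale J z (cscale J c (res J G z y)) + cscale J c a"
    using a(2) cscale_add_right[OF cs] cscale_commute[OF cs] by metis
  ultimately show ?thesis using res_shift_apply[OF inv] by simp
qed

lemma resolvent_identity:
  assumes cs: "complex_structure J" and lin: "lin_op J G"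
    and inv_w: "shift_invertible J G w" and inv_v: "shift_invertible J G v"
  shows "res J G w y - res J G v y = cscale J (v - w) (res J G w (res J G v y))"
proof -
  define u where "u = res J G v y"
  obtain a where a: "(u, a) \<in> G" "y = cscale J v u + a"
    using res_in_graph[OF inv_v] unfolding u_def by blast
  have "cscale J w u + a = y + cscale J (w - v) u"
    using a(2) by (simp add: cscale_diff_left)
  then have "res J G w y + cscale J (w - v) (res J G w u) = u"
    using res_shift_apply[OF inv_w a(1)] res_cscale[OF cs lin inv_w]
    by (simp add: blinfun.add_right)
  moreover have "cscale J (v - w) x = - cscale J (w - v) x" for x
    by (metis cscale_minus_left minus_diff_eq)
  ultimately show ?thesis
    unfolding u_def[symmetric] by (simp add: algebra_simps)
qed

text \<open>The complex-linear functional with real part \<open>\<phi>\<close>.\<close>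

definition complexify :: "('a::real_vector \<Rightarrow> 'a) \<Rightarrow> ('a \<Rightarrow> real) \<Rightarrow> 'a \<Rightarrow> complex" where
  "complexify J \<phi> v = Complex (\<phi> v) (- \<phi> (J v))"

lemma Re_complexify [simp]: "Re (complexify J \<phi> v) = \<phi> v"
  unfolding complexify_def by simp

lemma complexify_cscale:
  assumes "complex_structure J" "linear \<phi>"
  shows "complexify J \<phi> (cscale J c v) = c * complexify J \<phi> v"
proof -
  have J: "linear J" "J (J v) = - v" using complex_structureD[OF assms(1)] by auto
  have "J (cscale J c v) = Re c *\<^sub>R J v - Im c *\<^sub>R v"
    unfolding cscale_def using linear_add[OF J(1)] linear_scale[OF J(1)] J(2) by simp
  then have "\<phi> (J (cscale J c v)) = Re c * \<phi> (J v) - Im c * \<phi> v"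
    using linear_diff[OF assms(2)] linear_scale[OF assms(2)] by simp
  moreover have "\<phi> (cscale J c v) = Re c * \<phi> v + Im c * \<phi> (J v)"
    unfolding cscale_def using linear_add[OF assms(2)] linear_scale[OF assms(2)] by simp
  ultimately show ?thesis
    unfolding complexify_def by (simp add: complex_eq_iff algebra_simps)
qed

lemma complexify_diff:
  assumes "complex_structure J" "linear \<phi>"
  shows "complexify J \<phi> (a - b) = complexify J \<phi> a - complexify J \<phi> b"
  unfolding complexify_def
  using linear_diff[OF assms(2)] linear_diff[OF complex_structureD(1)[OF assms(1)]]
  by (simp add: complex_eq_iff)

lemma norm_complexify_le:
  assumes "complex_structure J" "\<And>v. \<bar>\<phi> v\<bar> \<le> norm v"
  shows "cmod (complexify J \<phi> v) \<le> 2 * norm v"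
proof -
  have "cmod (complexify J \<phi> v) \<le> \<bar>\<phi> v\<bar> + \<bar>\<phi> (J v)\<bar>"
    using cmod_le[of "complexify J \<phi> v"] unfolding complexify_def by simp
  also have "\<dots> \<le> norm v + norm (J v)"
    using assms(2) by (intro add_mono)
  finally show ?thesis using norm_J[OF assms(1)] by simp
qed

lemma tendsto_complexify:
  assumes "complex_structure J" "bounded_linear \<phi>" "(f \<longlongrightarrow> l) F"
  shows "((\<lambda>x. complexify J \<phi> (f x)) \<longlongrightarrow> complexify J \<phi> l) F"
  unfolding complexify_def
  by (intro tendsto_Complex tendsto_minus bounded_linear.tendsto[OF assms(2)]
      bounded_linear.tendsto[OF bounded_linear_J[OF assms(1)]] assms(3))

section \<open>Norming functionals\<close>

definition dominated_linear_graph :: "('a::real_normed_vector \<times> real) set \<Rightarrow> bool" where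
  "dominated_linear_graph \<Gamma> \<longleftrightarrow>
     (\<forall>u a w b. (u, a) \<in> \<Gamma> \<longrightarrow> (w, b) \<in> \<Gamma> \<longrightarrow> (u + w, a + b) \<in> \<Gamma>)
     \<and> (\<forall>u a c. (u, a) \<in> \<Gamma> \<longrightarrow> (c *\<^sub>R u, c * a) \<in> \<Gamma>)
     \<and> (\<forall>u a. (u, a) \<in> \<Gamma> \<longrightarrow> a \<le> norm u)"

lemma dominated_linear_graphD:
  assumes "dominated_linear_graph \<Gamma>"
  shows "(u, a) \<in> \<Gamma> \<Longrightarrow> (w, b) \<in> \<Gamma> \<Longrightarrow> (u + w, a + b) \<in> \<Gamma>"
    and "(u, a) \<in> \<Gamma> \<Longrightarrow> (c *\<^sub>R u, c * a) \<in> \<Gamma>"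
    and "(u, a) \<in> \<Gamma> \<Longrightarrow> a \<le> norm u"
  using assms unfolding dominated_linear_graph_def by blast+

text \<open>Single-valuedness need not be required in the definition: two values \<open>a, b\<close> at \<open>u\<close>
  produce the pairs \<open>(0, \<plusminus>(a - b))\<close>, and domination by \<open>\<parallel>0\<parallel> = 0\<close> forces \<open>a = b\<close>.\<close>

lemma dominated_linear_graph_single_valued:
  assumes \<Gamma>: "dominated_linear_graph \<Gamma>" and "(u, a) \<in> \<Gamma>" "(u, b) \<in> \<Gamma>"
  shows "a = b"
proof -
  have "(u + (-1) *\<^sub>R u, a + (-1) * b) \<in> \<Gamma>" "(u + (-1) *\<^sub>R u, b + (-1) * a) \<in> \<Gamma>"
    using assms(2,3) dominated_linear_graphD(1,2)[OF \<Gamma>] by blast+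
  then have "a - b \<le> 0" "b - a \<le> 0"
    using dominated_linear_graphD(3)[OF \<Gamma>] by force+
  then show ?thesis by simp
qed

lemma dominated_linear_graph_Union:
  assumes C: "C \<in> chains {\<Gamma>. dominated_linear_graph \<Gamma>}"
  shows "dominated_linear_graph (\<Union>C)"
proof -
  have dom: "dominated_linear_graph \<Gamma>" if "\<Gamma> \<in> C" for \<Gamma>
    using C that unfolding chains_def by auto
  have common: "\<exists>\<Gamma>\<in>C. p \<in> \<Gamma> \<and> q \<in> \<Gamma>" if pq: "p \<in> \<Union>C" "q \<in> \<Union>C" for p q
  proof -
    obtain \<Gamma>1 \<Gamma>2 where "\<Gamma>1 \<in> C" "\<Gamma>2 \<in> C" "p \<in> \<Gamma>1" "q \<in> \<Gamma>2"
      using pq by blast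
    then show ?thesis using chainsD[OF C, of \<Gamma>1 \<Gamma>2] by auto
  qed
  show ?thesis
    unfolding dominated_linear_graph_def
  proof (intro conjI allI impI)
    fix u a w b assume "(u, a) \<in> \<Union>C" "(w, b) \<in> \<Union>C"
    then obtain \<Gamma> where "\<Gamma> \<in> C" "(u, a) \<in> \<Gamma>" "(w, b) \<in> \<Gamma>" using common by blast
    then show "(u + w, a + b) \<in> \<Union>C" using dominated_linear_graphD(1)[OF dom] by blast
  next
    fix u a c assume "(u, a) \<in> \<Union>C"
    then show "(c *\<^sub>R u, c * a) \<in> \<Union>C" using dominated_linear_graphD(2)[OF dom] by blast
  next
    fix u a assume "(u, a) \<in> \<Union>C"
    then show "a \<le> norm u" using dominated_linear_graphD(3)[OF dom] by blast
  qed
qed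

text \<open>The one-step extension of Hahn--Banach: the new vector \<open>v\<close> can be assigned any \<open>c\<close>
  between all \<open>a - \<parallel>u - v\<parallel>\<close> and all \<open>\<parallel>w + v\<parallel> - b\<close>, which exists because \<open>a + b \<le> \<parallel>u + w\<parallel>\<close>.\<close>

lemma dominated_linear_graph_extension_value:
  assumes \<Gamma>: "dominated_linear_graph \<Gamma>" and "(0, 0) \<in> \<Gamma>"
  obtains c where "\<And>u a. (u, a) \<in> \<Gamma> \<Longrightarrow> a - norm (u - v) \<le> c"
    and "\<And>w b. (w, b) \<in> \<Gamma> \<Longrightarrow> c \<le> norm (w + v) - b"
proof
  define S where "S = {a - norm (u - v) | u a. (u, a) \<in> \<Gamma>}"
  have sandwich: "a - norm (u - v) \<le> norm (w + v) - b" if "(u, a) \<in> \<Gamma>" "(w, b) \<in> \<Gamma>" for u a w b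
  proof -
    have "a + b \<le> norm (u + w)"
      by (rule dominated_linear_graphD(3)[OF \<Gamma> dominated_linear_graphD(1)[OF \<Gamma> that]])
    also have "\<dots> \<le> norm (u - v) + norm (w + v)"
      using norm_triangle_ineq[of "u - v" "w + v"] by simp
    finally show ?thesis by simp
  qed
  have "bdd_above S"
    unfolding S_def bdd_above_def using sandwich[OF _ \<open>(0, 0) \<in> \<Gamma>\<close>] by auto
  then show "a - norm (u - v) \<le> Sup S" if "(u, a) \<in> \<Gamma>" for u a
    using that by (auto intro!: cSup_upper simp: S_def)
  show "Sup S \<le> norm (w + v) - b" if "(w, b) \<in> \<Gamma>" for w b
    using that \<open>(0, 0) \<in> \<Gamma>\<close> sandwich unfolding S_def by (auto intro!: cSup_least)
qed

lemma dominated_extension_bound: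
  assumes \<Gamma>: "dominated_linear_graph \<Gamma>"
    and lower: "\<And>u a. (u, a) \<in> \<Gamma> \<Longrightarrow> a - norm (u - v) \<le> c"
    and upper: "\<And>w b. (w, b) \<in> \<Gamma> \<Longrightarrow> c \<le> norm (w + v) - b"
    and "(u, a) \<in> \<Gamma>"
  shows "a + t * c \<le> norm (u + t *\<^sub>R v)"
proof (cases t "0::real" rule: linorder_cases)
  case equal
  then show ?thesis using dominated_linear_graphD(3)[OF \<Gamma> \<open>(u, a) \<in> \<Gamma>\<close>] by simp
next
  case greater
  have "c \<le> norm ((1 / t) *\<^sub>R u + v) - (1 / t) * a"
    by (rule upper[OF dominated_linear_graphD(2)[OF \<Gamma> \<open>(u, a) \<in> \<Gamma>\<close>]])
  then have "t * c \<le> t * (norm ((1 / t) *\<^sub>R u + v) - (1 / t) * a)"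
    by (rule mult_left_mono) (use greater in simp)
  also have "\<dots> = norm (t *\<^sub>R ((1 / t) *\<^sub>R u + v)) - a"
    using greater by (simp add: right_diff_distrib)
  also have "t *\<^sub>R ((1 / t) *\<^sub>R u + v) = u + t *\<^sub>R v"
    using greater by (simp add: algebra_simps)
  finally show ?thesis by simp
next
  case less
  define s where "s = - t"
  have s: "s > 0" using less by (simp add: s_def)
  have "(1 / s) * a - norm ((1 / s) *\<^sub>R u - v) \<le> c"
    by (rule lower[OF dominated_linear_graphD(2)[OF \<Gamma> \<open>(u, a) \<in> \<Gamma>\<close>]])
  then have "s * ((1 / s) * a - norm ((1 / s) *\<^sub>R u - v)) \<le> s * c"
    by (rule mult_left_mono) (use s in simp)
  moreover have "u + t *\<^sub>R v = s *\<^sub>R ((1 / s) *\<^sub>R u - v)"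
    using s by (simp add: s_def algebra_simps)
  then have "s * ((1 / s) * a - norm ((1 / s) *\<^sub>R u - v)) = a - norm (u + t *\<^sub>R v)"
    using s by (simp add: right_diff_distrib)
  ultimately show ?thesis by (simp add: s_def)
qed

lemma dominated_linear_graph_extend:
  assumes \<Gamma>: "dominated_linear_graph \<Gamma>" and "(0, 0) \<in> \<Gamma>" and v: "v \<notin> Domain \<Gamma>"
  obtains \<Gamma>' where "dominated_linear_graph \<Gamma>'" "\<Gamma> \<subset> \<Gamma>'"
proof -
  obtain c where lower: "\<And>u a. (u, a) \<in> \<Gamma> \<Longrightarrow> a - norm (u - v) \<le> c"
    and upper: "\<And>w b. (w, b) \<in> \<Gamma> \<Longrightarrow> c \<le> norm (w + v) - b"
    using dominated_linear_graph_extension_value[OF assms(1,2)] by blast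
  define \<Gamma>' where "\<Gamma>' = {(u + t *\<^sub>R v, a + t * c) | u a t. (u, a) \<in> \<Gamma>}"
  have "\<Gamma> \<subseteq> \<Gamma>'" unfolding \<Gamma>'_def by force
  moreover have "(v, c) \<in> \<Gamma>'" unfolding \<Gamma>'_def using \<open>(0, 0) \<in> \<Gamma>\<close> by force
  ultimately have "\<Gamma> \<subset> \<Gamma>'" using v by blast
  moreover have "dominated_linear_graph \<Gamma>'"
    unfolding dominated_linear_graph_def
  proof (intro conjI allI impI)
    fix x a y b assume "(x, a) \<in> \<Gamma>'" "(y, b) \<in> \<Gamma>'"
    then obtain u a' s w b' t where "(u, a') \<in> \<Gamma>" "(w, b') \<in> \<Gamma>"
      and "x = u + s *\<^sub>R v" "a = a' + s * c" "y = w + t *\<^sub>R v" "b = b' + t * c"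
      unfolding \<Gamma>'_def by blast
    moreover have "x + y = (u + w) + (s + t) *\<^sub>R v" "a + b = (a' + b') + (s + t) * c"
      using calculation by (simp_all add: algebra_simps)
    ultimately show "(x + y, a + b) \<in> \<Gamma>'"
      unfolding \<Gamma>'_def by (blast intro: dominated_linear_graphD(1)[OF \<Gamma>])
  next
    fix x a r assume "(x, a) \<in> \<Gamma>'"
    then obtain u a' t where "(u, a') \<in> \<Gamma>" "x = u + t *\<^sub>R v" "a = a' + t * c"
      unfolding \<Gamma>'_def by blast
    moreover have "r *\<^sub>R x = r *\<^sub>R u + (r * t) *\<^sub>R v" "r * a = r * a' + (r * t) * c"
      using calculation by (simp_all add: algebra_simps)
    ultimately show "(r *\<^sub>R x, r * a) \<in> \<Gamma>'"
      unfolding \<Gamma>'_def by (blast intro: dominated_linear_graphD(2)[OF \<Gamma>])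
  next
    fix x a assume "(x, a) \<in> \<Gamma>'"
    then show "a \<le> norm x"
      unfolding \<Gamma>'_def using dominated_extension_bound[OF \<Gamma> lower upper] by blast
  qed
  ultimately show ?thesis using that by blast
qed

text \<open>Real Hahn--Banach for the norm as sublinear functional, by Zorn's lemma on
  dominated linear graphs through \<open>(y, \<parallel>y\<parallel>)\<close>.\<close>

lemma norming_functional_exists:
  fixes y :: "'a::real_normed_vector"
  obtains \<phi> where "bounded_linear \<phi>" "\<And>v. \<bar>\<phi> v\<bar> \<le> norm v" "\<phi> y = norm y"
proof -
  define A where "A = {\<Gamma>. dominated_linear_graph \<Gamma> \<and> (y, norm y) \<in> (\<Gamma> :: ('a \<times> real) set)}"
  have "\<exists>U\<in>A. \<forall>X\<in>C. X \<subseteq> U" if C: "C \<in> chains A" for C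
  proof (cases "C = {}")
    case True
    have "dominated_linear_graph (range (\<lambda>c. (c *\<^sub>R y, c * norm y)))"
      unfolding dominated_linear_graph_def
    proof (intro conjI allI impI)
      fix u a w b assume "(u, a) \<in> range (\<lambda>c. (c *\<^sub>R y, c * norm y))"
        "(w, b) \<in> range (\<lambda>c. (c *\<^sub>R y, c * norm y))"
      then show "(u + w, a + b) \<in> range (\<lambda>c. (c *\<^sub>R y, c * norm y))"
        by (auto intro!: image_eqI[where x = "_ + _"] simp: scaleR_add_left distrib_right)
    next
      fix u a c assume "(u, a) \<in> range (\<lambda>c. (c *\<^sub>R y, c * norm y))"
      then show "(c *\<^sub>R u, c * a) \<in> range (\<lambda>c. (c *\<^sub>R y, c * norm y))"
        by (auto intro!: image_eqI[where x = "c * _"])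
    next
      fix u a assume "(u, a) \<in> range (\<lambda>c. (c *\<^sub>R y, c * norm y))"
      then obtain r where "u = r *\<^sub>R y" "a = r * norm y" by blast
      then show "a \<le> norm u" by (simp add: mult_right_mono)
    qed
    moreover have "(y, norm y) \<in> range (\<lambda>c. (c *\<^sub>R y, c * norm y))"
      by (rule image_eqI[where x = 1]) simp_all
    ultimately show ?thesis using True unfolding A_def by blast
  next
    case False
    have "C \<in> chains {\<Gamma>. dominated_linear_graph \<Gamma>}"
      using C unfolding A_def chains_def by auto
    then have "dominated_linear_graph (\<Union>C)"
      by (rule dominated_linear_graph_Union)
    moreover have "(y, norm y) \<in> \<Union>C"
      using C False unfolding A_def chains_def by auto
    ultimately show ?thesis unfolding A_def by blast
  qed
  then obtain \<Gamma> where "\<Gamma> \<in> A" and maximal: "\<forall>X\<in>A. \<Gamma> \<subseteq> X \<longrightarrow> X = \<Gamma>"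
    using Zorn_Lemma2[of A] by (meson ballI)
  then have \<Gamma>: "dominated_linear_graph \<Gamma>" and y: "(y, norm y) \<in> \<Gamma>"
    unfolding A_def by auto
  have zero: "(0, 0) \<in> \<Gamma>"
    using dominated_linear_graphD(2)[OF \<Gamma> y, of 0] by simp
  have total: "v \<in> Domain \<Gamma>" for v
  proof (rule ccontr)
    assume "v \<notin> Domain \<Gamma>"
    then obtain \<Gamma>' where "dominated_linear_graph \<Gamma>'" "\<Gamma> \<subset> \<Gamma>'"
      using dominated_linear_graph_extend[OF \<Gamma> zero] by blast
    moreover have "\<Gamma>' \<in> A" using calculation y unfolding A_def by blast
    ultimately show False using maximal by blast
  qed
  define \<phi> where "\<phi> v = (THE a. (v, a) \<in> \<Gamma>)" for v
  have phi_eq: "\<phi> v = a" if "(v, a) \<in> \<Gamma>" for v a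
    unfolding \<phi>_def
    by (rule the_equality) (use that dominated_linear_graph_single_valued[OF \<Gamma>] in blast)+
  have graph: "(v, \<phi> v) \<in> \<Gamma>" for v
    using total[of v] phi_eq by (metis DomainE)
  have "linear \<phi>"
  proof (rule linearI)
    show "\<phi> (u + w) = \<phi> u + \<phi> w" for u w
      by (rule phi_eq[OF dominated_linear_graphD(1)[OF \<Gamma> graph graph]])
    show "\<phi> (r *\<^sub>R u) = r *\<^sub>R \<phi> u" for r u
      using phi_eq[OF dominated_linear_graphD(2)[OF \<Gamma> graph]] by simp
  qed
  moreover have bound: "\<bar>\<phi> v\<bar> \<le> norm v" for v
  proof -
    have "\<phi> v \<le> norm v" "\<phi> (- v) \<le> norm (- v)"
      using dominated_linear_graphD(3)[OF \<Gamma> graph] by blast+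
    then show ?thesis using linear_neg[OF \<open>linear \<phi>\<close>, of v] by simp
  qed
  ultimately have "bounded_linear \<phi>"
    by (intro bounded_linear_intro[of \<phi> 1]) (simp_all add: linear_add linear_scale)
  then show ?thesis using that bound phi_eq[OF y] by blast
qed

section \<open>Resolvent estimates in the right half-plane\<close>

locale half_plane_resolvent_estimate =
  fixes J :: "'a::real_normed_vector \<Rightarrow> 'a" and G :: "('a \<times> 'a) set" and M :: real
  assumes complex_structure: "complex_structure J"
    and lin_op: "lin_op J G"
    and shift_invertible: "\<And>w. Re w > 0 \<Longrightarrow> shift_invertible J G w"
    and resolvent_bound: "\<And>w. Re w > 0 \<Longrightarrow> cmod w * norm (res J G w) \<le> M"
begin

abbreviation R :: "complex \<Rightarrow> 'a \<Rightarrow>\<^sub>L 'a" where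
  "R \<equiv> res J G"

lemma M_nonneg: "0 \<le> M"
proof -
  have "cmod 1 * norm (R 1) \<le> M" by (rule resolvent_bound) simp
  then show ?thesis by (metis norm_ge_zero norm_one mult_1 order_trans)
qed

lemma norm_res_le:
  assumes "Re w > 0"
  shows "norm (R w) \<le> M / cmod w"
proof -
  have "cmod w > 0" using assms by auto
  then show ?thesis
    using resolvent_bound[OF assms] by (simp add: pos_le_divide_eq mult.commute)
qed

lemma norm_res_apply_le:
  assumes "Re w > 0"
  shows "norm (R w v) \<le> M / cmod w * norm v"
  using norm_blinfun[of "R w" v] norm_res_le[OF assms]
  by (meson mult_right_mono norm_ge_zero order_trans)

lemma res_diff:
  assumes "Re w > 0" "Re v > 0"
  shows "R w y - R v y = cscale J (v - w) (R w (R v y))"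
  using resolvent_identity[OF complex_structure lin_op] shift_invertible assms by blast

text \<open>For \<open>u = (1 + A)\<^sup>-\<^sup>1 x \<noteq> 0\<close> with \<open>A u = a\<close> we have \<open>u = (t + A)\<^sup>-\<^sup>1 (t u + a)\<close>, so
  \<open>\<parallel>u\<parallel> \<le> M (\<parallel>u\<parallel> + \<parallel>a\<parallel> / t)\<close> for all \<open>t > 0\<close>.\<close>

lemma M_ge_1:
  fixes x :: 'a
  assumes "x \<noteq> 0"
  shows "1 \<le> M"
proof (rule ccontr)
  assume "\<not> 1 \<le> M"
  define u where "u = R 1 x"
  obtain a where a: "(u, a) \<in> G" "x = u + a"
    using res_in_graph[OF shift_invertible[of 1]] unfolding u_def by auto
  have "u \<noteq> 0"
    using a assms lin_op unfolding lin_op_def by auto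
  have bound: "t * (1 - M) * norm u \<le> M * norm a" if t: "t > 0" for t :: real
  proof -
    have "u = R (complex_of_real t) (t *\<^sub>R u + a)"
      using res_shift_apply[OF shift_invertible a(1), of "complex_of_real t"] t by simp
    then have "norm u \<le> M / t * norm (t *\<^sub>R u + a)"
      using norm_res_apply_le[of "complex_of_real t" "t *\<^sub>R u + a"] t by simp
    also have "\<dots> \<le> M / t * (t * norm u + norm a)"
      using norm_triangle_ineq[of "t *\<^sub>R u" a] t M_nonneg by (intro mult_left_mono) auto
    also have "\<dots> = M * norm u + M * norm a / t"
      using t by (simp add: field_simps)
    finally show ?thesis
      using t by (simp add: field_simps)
  qed
  define D where "D = (1 - M) * norm u"
  have "D > 0"
    using \<open>\<not> 1 \<le> M\<close> \<open>u \<noteq> 0\<close> by (simp add: D_def)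
  define t where "t = (M * norm a + 1) / D"
  have "t > 0"
    using \<open>D > 0\<close> M_nonneg by (simp add: t_def add_nonneg_pos)
  moreover have "t * D = M * norm a + 1"
    using \<open>D > 0\<close> by (simp add: t_def)
  ultimately show False
    using bound[of t] by (simp add: D_def mult.assoc)
qed

lemma res_tendsto:
  assumes z: "Re z > 0"
  shows "((\<lambda>w. R w v) \<longlongrightarrow> R z v) (at z)"
proof -
  have near: "\<forall>\<^sub>F w in at z. Re w > Re z / 2"
    using z by (intro order_tendstoD(1)[OF tendsto_Re[OF tendsto_ident_at]]) simp
  have "\<forall>\<^sub>F w in at z. norm (R w v - R z v) \<le> cmod (z - w) * (M / (Re z / 2) * norm (R z v))"
    using near
  proof eventually_elim
    case (elim w)
    then have w: "Re w > 0" using z by simp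
    have "Re z / 2 \<le> cmod w"
      using elim complex_Re_le_cmod[of w] by linarith
    then have "M / cmod w \<le> M / (Re z / 2)"
      by (intro frac_le) (use M_nonneg z in auto)
    then have "norm (R w (R z v)) \<le> M / (Re z / 2) * norm (R z v)"
      using norm_res_apply_le[OF w, of "R z v"] mult_right_mono[OF _ norm_ge_zero] order_trans by blast
    then show ?case
      unfolding res_diff[OF w z] complex_structureD(3)[OF complex_structure]
      by (intro mult_left_mono) auto
  qed
  moreover have "((\<lambda>w. cmod (z - w) * (M / (Re z / 2) * norm (R z v))) \<longlongrightarrow> 0) (at z)"
    by (intro tendsto_mult_left_zero tendsto_norm_zero) (auto intro!: tendsto_eq_intros)
  ultimately have "((\<lambda>w. R w v - R z v) \<longlongrightarrow> 0) (at z)"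
    by (rule Lim_null_comparison)
  then show ?thesis by (simp add: LIM_zero_iff)
qed

lemma complexify_res_has_field_derivative:
  assumes \<phi>: "bounded_linear \<phi>" and \<zeta>: "Re \<zeta> > 0"
  shows "((\<lambda>w. complexify J \<phi> (R w x)) has_field_derivative - complexify J \<phi> (R \<zeta> (R \<zeta> x))) (at \<zeta>)"
proof -
  let ?L = "complexify J \<phi>"
  have lin: "linear \<phi>" using \<phi> bounded_linear.linear by blast
  have "\<forall>\<^sub>F w in at \<zeta>. - ?L (R w (R \<zeta> x)) = (?L (R w x) - ?L (R \<zeta> x)) / (w - \<zeta>)"
    using order_tendstoD(1)[OF tendsto_Re[OF tendsto_ident_at] \<zeta>] eventually_neq_at_within[of \<zeta> \<zeta> UNIV]
  proof eventually_elim
    case (elim w)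
    then have "?L (R w x) - ?L (R \<zeta> x) = (\<zeta> - w) * ?L (R w (R \<zeta> x))"
      using res_diff[of w \<zeta> x] \<zeta>
      by (simp add: complexify_diff[OF complex_structure lin, symmetric]
          complexify_cscale[OF complex_structure lin])
    then show ?case
      using elim by (simp add: field_simps)
  qed
  moreover have "((\<lambda>w. - ?L (R w (R \<zeta> x))) \<longlongrightarrow> - ?L (R \<zeta> (R \<zeta> x))) (at \<zeta>)"
    by (intro tendsto_minus tendsto_complexify[OF complex_structure \<phi>] res_tendsto \<zeta>)
  ultimately show ?thesis
    unfolding has_field_derivative_iff by (rule Lim_transform_eventually[rotated])
qed

text \<open>Cauchy's estimate for the derivative on the disc of radius \<open>Re z / 2\<close> about \<open>z\<close>, on whose
  boundary \<open>\<bar>w\<bar> \<ge> \<bar>z\<bar> / 2\<close>.\<close>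

lemma norm_complexify_res_squared_le:
  assumes \<phi>: "bounded_linear \<phi>" "\<And>v. \<bar>\<phi> v\<bar> \<le> norm v" and z: "Re z > 0"
  shows "cmod (complexify J \<phi> (R z (R z x))) \<le> 8 * M * norm x / (Re z * cmod z)"
proof -
  define f where "f w = complexify J \<phi> (R w x)" for w
  define r where "r = Re z / 2"
  have "r > 0" using z by (simp add: r_def)
  have disc: "cball z r \<subseteq> {w. Re w > 0}"
  proof
    fix w assume "w \<in> cball z r"
    then have "Re z - Re w \<le> r"
      using complex_Re_le_cmod[of "z - w"] by (simp add: dist_norm)
    then show "w \<in> {w. Re w > 0}" using z by (simp add: r_def)
  qed
  have deriv: "(f has_field_derivative - complexify J \<phi> (R w (R w x))) (at w)" if "Re w > 0" for w
    unfolding f_def by (rule complexify_res_has_field_derivative[OF \<phi>(1) that])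
  then have "f holomorphic_on {w. Re w > 0}"
    unfolding holomorphic_on_def field_differentiable_def
    by (meson has_field_derivative_at_within mem_Collect_eq)
  then have hol: "f holomorphic_on ball z r" and cont: "continuous_on (cball z r) f"
    using disc ball_subset_cball[of z r]
    by (blast intro: holomorphic_on_subset continuous_on_subset[OF holomorphic_on_imp_continuous_on])+
  have boundary: "cmod (f w) \<le> 4 * M * norm x / cmod z" if w: "cmod (z - w) = r" for w
  proof -
    have "Re w > 0" using disc w by (auto simp: dist_norm)
    have "cmod z / 2 \<le> cmod w"
      using norm_triangle_ineq[of w "z - w"] complex_Re_le_cmod[of z] w by (simp add: r_def)
    then have "M / cmod w \<le> M / (cmod z / 2)"
      by (intro frac_le) (use M_nonneg z in auto)
    have "cmod (f w) \<le> 2 * norm (R w x)"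
      unfolding f_def by (rule norm_complexify_le[OF complex_structure \<phi>(2)])
    also have "\<dots> \<le> 2 * (M / cmod w * norm x)"
      using norm_res_apply_le[OF \<open>Re w > 0\<close>, of x] by linarith
    also have "\<dots> \<le> 2 * (M / (cmod z / 2) * norm x)"
      using \<open>M / cmod w \<le> M / (cmod z / 2)\<close> by (intro mult_left_mono mult_right_mono) auto
    finally show ?thesis by simp
  qed
  have "cmod ((deriv ^^ 1) f z) \<le> fact 1 * (4 * M * norm x / cmod z) / r ^ 1"
    by (rule Cauchy_inequality[OF hol cont \<open>r > 0\<close>]) (use boundary in \<open>simp add: norm_minus_commute\<close>)
  moreover have "deriv f z = - complexify J \<phi> (R z (R z x))"
    using deriv[OF z] by (rule DERIV_imp_deriv)
  ultimately show ?thesis by (simp add: r_def ac_simps)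
qed

lemma norm_res_squared_le:
  assumes z: "Re z > 0"
  shows "norm (R z o\<^sub>L R z) \<le> 8 * M / (Re z * cmod z)"
proof (rule norm_blinfun_bound)
  show "0 \<le> 8 * M / (Re z * cmod z)" using M_nonneg z by simp
  fix x
  obtain \<phi> where \<phi>: "bounded_linear \<phi>" "\<And>v. \<bar>\<phi> v\<bar> \<le> norm v"
    and norming: "\<phi> (R z (R z x)) = norm (R z (R z x))"
    using norming_functional_exists by blast
  have "norm (R z (R z x)) \<le> cmod (complexify J \<phi> (R z (R z x)))"
    using complex_Re_le_cmod norming by (metis Re_complexify)
  also have "\<dots> \<le> 8 * M * norm x / (Re z * cmod z)"
    by (rule norm_complexify_res_squared_le[OF \<phi> z])
  finally show "norm ((R z o\<^sub>L R z) x) \<le> 8 * M / (Re z * cmod z) * norm x"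
    by simp
qed

lemma norm_res_squared_le_square:
  assumes z: "Re z > 0"
  shows "norm (R z o\<^sub>L R z) \<le> (M / cmod z)\<^sup>2"
proof -
  have "norm (R z o\<^sub>L R z) \<le> norm (R z) * norm (R z)"
    by (rule norm_blinfun_compose)
  also have "\<dots> \<le> (M / cmod z) * (M / cmod z)"
    using norm_res_le[OF z] M_nonneg by (intro mult_mono) auto
  finally show ?thesis by (simp add: power2_eq_square)
qed

end

lemma sector_half_pi: "sector (pi / 2) = {z. Re z > 0}"
  unfolding sector_def using Arg_Re_pos by auto

lemma sect_half_pi_resolvent_estimate:
  assumes cs: "complex_structure J" and sect: "sect_half_pi J G"
  shows "half_plane_resolvent_estimate J G (sect_const J G)"
proof -
  obtain \<theta> where \<theta>: "sectorial_of_angle J G \<theta>"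
    using sect unfolding sect_half_pi_def by blast
  then have "\<theta> < pi / 2" and lin: "lin_op J G"
    unfolding sectorial_of_angle_def by auto
  moreover have "\<theta> < pi / 2 \<and> pi / 2 \<le> pi \<longrightarrow>
      (\<exists>C. \<forall>z\<in>sector (pi - pi / 2). shift_invertible J G z \<and> cmod z * norm (res J G z) \<le> C)"
    using \<theta> unfolding sectorial_of_angle_def by blast
  ultimately have "\<exists>C. \<forall>z\<in>sector (pi / 2). shift_invertible J G z \<and> cmod z * norm (res J G z) \<le> C"
    by simp
  then obtain C where C: "\<And>z. Re z > 0 \<Longrightarrow> shift_invertible J G z \<and> cmod z * norm (res J G z) \<le> C"
    by (auto simp: sector_half_pi)
  have "bdd_above ((\<lambda>z. cmod z * norm (res J G z)) ` {z. Re z > 0})"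
    using C by (auto intro!: bdd_aboveI2)
  then show ?thesis
    unfolding sect_const_def using cs lin C
    by unfold_locales (auto intro!: cSUP_upper)
qed

section \<open>The integral estimate\<close>

lemma nn_integral_abs_le:
  fixes h :: "real \<Rightarrow> ennreal"
  assumes [measurable]: "h \<in> borel_measurable borel"
  shows "(\<integral>\<^sup>+\<beta>. h \<bar>\<beta>\<bar> \<partial>lborel) \<le> 2 * (\<integral>\<^sup>+t. h t \<partial>lborel)"
proof -
  have "(\<integral>\<^sup>+\<beta>. h \<bar>\<beta>\<bar> \<partial>lborel) \<le> (\<integral>\<^sup>+\<beta>. h \<beta> + h (- \<beta>) \<partial>lborel)"
    by (intro nn_integral_mono) (simp add: abs_if add_increasing add_increasing2)
  also have "\<dots> = (\<integral>\<^sup>+\<beta>. h \<beta> \<partial>lborel) + (\<integral>\<^sup>+\<beta>. h (- \<beta>) \<partial>lborel)"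
    by (rule nn_integral_add) measurable
  also have "(\<integral>\<^sup>+\<beta>. h (- \<beta>) \<partial>lborel) = (\<integral>\<^sup>+t. h t \<partial>lborel)"
    using nn_integral_real_affine[OF assms, of "-1" 0] by simp
  finally show ?thesis by (simp add: mult_2)
qed

lemma nn_integral_inverse_interval:
  fixes a b c :: real
  assumes "0 < a" "a \<le> b" "0 \<le> c"
  shows "(\<integral>\<^sup>+t. ennreal (c / t) * indicator {a..b} t \<partial>lborel) = ennreal (c * ln (b / a))"
proof (rule nn_integral_has_integral_lebesgue')
  show "0 \<le> c / t" if "t \<in> {a..b}" for t
    using that assms by simp
  have "((\<lambda>t. c / t) has_integral (c * ln b - c * ln a)) {a..b}"
  proof (rule fundamental_theorem_of_calculus)
    show "((\<lambda>t. c * ln t) has_vector_derivative c / t) (at t within {a..b})" if "t \<in> {a..b}" for t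
      using that assms
      by (auto intro!: derivative_eq_intros
          simp: has_real_derivative_iff_has_vector_derivative[symmetric] field_simps)
  qed (use assms in simp)
  then show "((\<lambda>t. c / t) has_integral (c * ln (b / a))) {a..b}"
    using assms by (simp add: ln_div right_diff_distrib)
qed

lemma nn_integral_inverse_square_atLeast:
  fixes a c :: real
  assumes "0 < a" "0 \<le> c"
  shows "(\<integral>\<^sup>+t. ennreal (c / t\<^sup>2) * indicator {a..} t \<partial>lborel) = ennreal (c / a)"
proof -
  have "(\<integral>\<^sup>+t. ennreal (c / t\<^sup>2) * indicator {a..} t \<partial>lborel) = 0 - (- c / a)"
  proof (rule nn_integral_FTC_atLeast)
    show "((\<lambda>t. - c / t) has_real_derivative c / t\<^sup>2) (at t)" if "a \<le> t" for t
      using that assms by (auto intro!: derivative_eq_intros simp: power2_eq_square)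
    show "((\<lambda>t. - c / t) \<longlongrightarrow> 0) at_top"
      by (intro tendsto_divide_0[OF tendsto_const] filterlim_at_top_imp_at_infinity filterlim_ident)
  qed (use assms in auto)
  then show ?thesis by simp
qed

text \<open>Below \<open>\<bar>\<beta>\<bar> = M \<alpha>\<close> the bound \<open>8 M / (\<alpha> \<bar>\<alpha> + i \<beta>\<bar>)\<close> is used, beyond it \<open>M\<^sup>2 / \<bar>\<alpha> + i \<beta>\<bar>\<^sup>2\<close>.\<close>

definition res_squared_majorant :: "real \<Rightarrow> real \<Rightarrow> real \<Rightarrow> ennreal" where
  "res_squared_majorant \<alpha> M t = ennreal (8 * M / \<alpha>\<^sup>2) * indicator {0..\<alpha>} t
     + ennreal (8 * M / \<alpha> / t) * indicator {\<alpha>..M * \<alpha>} t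
     + ennreal (M\<^sup>2 / t\<^sup>2) * indicator {M * \<alpha>..} t"

lemma res_squared_majorant_measurable [measurable]:
  "res_squared_majorant \<alpha> M \<in> borel_measurable borel"
  unfolding res_squared_majorant_def by measurable

lemma nn_integral_res_squared_majorant:
  assumes "0 < \<alpha>" "1 \<le> M"
  shows "(\<integral>\<^sup>+t. res_squared_majorant \<alpha> M t \<partial>lborel) = ennreal ((9 * M + 8 * M * ln M) / \<alpha>)"
proof -
  let ?f = "\<lambda>t. ennreal (8 * M / \<alpha>\<^sup>2) * indicator {0..\<alpha>} t"
  let ?g = "\<lambda>t. ennreal (8 * M / \<alpha> / t) * indicator {\<alpha>..M * \<alpha>} t"
  let ?h = "\<lambda>t. ennreal (M\<^sup>2 / t\<^sup>2) * indicator {M * \<alpha>..} t"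
  have "(\<integral>\<^sup>+t. res_squared_majorant \<alpha> M t \<partial>lborel)
      = (\<integral>\<^sup>+t. ?f t \<partial>lborel) + (\<integral>\<^sup>+t. ?g t \<partial>lborel) + (\<integral>\<^sup>+t. ?h t \<partial>lborel)"
    unfolding res_squared_majorant_def
    by (simp add: nn_integral_add)
  also have "\<dots> = ennreal (8 * M / \<alpha>) + ennreal (8 * M / \<alpha> * ln M) + ennreal (M / \<alpha>)"
  proof -
    have "(\<integral>\<^sup>+t. ennreal (8 * M / \<alpha>\<^sup>2) * indicator {0..\<alpha>} t \<partial>lborel) = ennreal (8 * M / \<alpha>)"
      using assms by (simp add: nn_integral_cmult_indicator ennreal_mult[symmetric] power2_eq_square)
    moreover have "(\<integral>\<^sup>+t. ennreal (8 * M / \<alpha> / t) * indicator {\<alpha>..M * \<alpha>} t \<partial>lborel)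
        = ennreal (8 * M / \<alpha> * ln M)"
      using nn_integral_inverse_interval[of \<alpha> "M * \<alpha>" "8 * M / \<alpha>"] assms by simp
    moreover have "(\<integral>\<^sup>+t. ennreal (M\<^sup>2 / t\<^sup>2) * indicator {M * \<alpha>..} t \<partial>lborel) = ennreal (M / \<alpha>)"
      using nn_integral_inverse_square_atLeast[of "M * \<alpha>" "M\<^sup>2"] assms by (simp add: power2_eq_square)
    ultimately show ?thesis by simp
  qed
  also have "\<dots> = ennreal (8 * M / \<alpha> + 8 * M / \<alpha> * ln M + M / \<alpha>)"
    using assms by (subst ennreal_plus; simp)+
  also have "8 * M / \<alpha> + 8 * M / \<alpha> * ln M + M / \<alpha> = (9 * M + 8 * M * ln M) / \<alpha>"
    using assms by (simp add: field_simps)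
  finally show ?thesis .
qed

context half_plane_resolvent_estimate
begin

lemma res_squared_le_majorant:
  assumes \<alpha>: "0 < \<alpha>" and M: "1 \<le> M"
  shows "ennreal (norm (R (Complex \<alpha> \<beta>) o\<^sub>L R (Complex \<alpha> \<beta>))) \<le> res_squared_majorant \<alpha> M \<bar>\<beta>\<bar>"
proof -
  let ?z = "Complex \<alpha> \<beta>"
  let ?f = "norm (R ?z o\<^sub>L R ?z)"
  have z: "Re ?z = \<alpha>" "\<alpha> \<le> cmod ?z" "\<bar>\<beta>\<bar> \<le> cmod ?z"
    using complex_Re_le_cmod[of ?z] abs_Im_le_cmod[of ?z] by auto
  have near: "?f \<le> 8 * M / (\<alpha> * cmod ?z)"
    using norm_res_squared_le[of ?z] z \<alpha> by simp
  consider "\<bar>\<beta>\<bar> \<le> \<alpha>" | "\<alpha> \<le> \<bar>\<beta>\<bar>" "\<bar>\<beta>\<bar> \<le> M * \<alpha>" | "M * \<alpha> \<le> \<bar>\<beta>\<bar>"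
    by linarith
  then show ?thesis
  proof cases
    case 1
    have "8 * M / (\<alpha> * cmod ?z) \<le> 8 * M / \<alpha>\<^sup>2"
      using z \<alpha> M by (auto simp: power2_eq_square intro!: frac_le mult_left_mono)
    with near have "ennreal ?f \<le> ennreal (8 * M / \<alpha>\<^sup>2)"
      by (intro ennreal_leI) linarith
    also have "\<dots> \<le> res_squared_majorant \<alpha> M \<bar>\<beta>\<bar>"
      using 1 unfolding res_squared_majorant_def by (auto intro!: add_increasing2)
    finally show ?thesis .
  next
    case 2
    have "8 * M / (\<alpha> * cmod ?z) \<le> 8 * M / \<alpha> / \<bar>\<beta>\<bar>"
      using 2 z \<alpha> M by (auto intro!: frac_le mult_left_mono)
    with near have "ennreal ?f \<le> ennreal (8 * M / \<alpha> / \<bar>\<beta>\<bar>)"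
      by (intro ennreal_leI) linarith
    also have "\<dots> \<le> res_squared_majorant \<alpha> M \<bar>\<beta>\<bar>"
      using 2 unfolding res_squared_majorant_def by (auto intro!: add_increasing2 add_increasing)
    finally show ?thesis .
  next
    case 3
    have "0 < M * \<alpha>" using \<alpha> M by simp
    then have "\<bar>\<beta>\<bar> > 0" using 3 by linarith
    then have "(M / cmod ?z)\<^sup>2 \<le> (M / \<bar>\<beta>\<bar>)\<^sup>2"
      using z M by (intro power_mono frac_le) auto
    then have "ennreal ?f \<le> ennreal (M\<^sup>2 / \<bar>\<beta>\<bar>\<^sup>2)"
      using norm_res_squared_le_square[of ?z] z \<alpha> by (intro ennreal_leI) (simp add: power_divide)
    also have "\<dots> \<le> res_squared_majorant \<alpha> M \<bar>\<beta>\<bar>"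
      using 3 unfolding res_squared_majorant_def by (auto intro!: add_increasing2 add_increasing)
    finally show ?thesis .
  qed
qed

lemma weighted_integral_res_squared_le:
  assumes \<alpha>: "0 < \<alpha>" and M: "1 \<le> M"
  shows "ennreal \<alpha> * (\<integral>\<^sup>+\<beta>. ennreal (norm (R (Complex \<alpha> \<beta>) o\<^sub>L R (Complex \<alpha> \<beta>))) \<partial>lborel)
    \<le> ennreal (16 * M * ln M + 18 * M)"
proof -
  have "(\<integral>\<^sup>+\<beta>. ennreal (norm (R (Complex \<alpha> \<beta>) o\<^sub>L R (Complex \<alpha> \<beta>))) \<partial>lborel)
      \<le> (\<integral>\<^sup>+\<beta>. res_squared_majorant \<alpha> M \<bar>\<beta>\<bar> \<partial>lborel)"
    by (intro nn_integral_mono res_squared_le_majorant assms)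
  also have "\<dots> \<le> 2 * (\<integral>\<^sup>+t. res_squared_majorant \<alpha> M t \<partial>lborel)"
    by (rule nn_integral_abs_le) measurable
  also have "\<dots> = ennreal (2 * ((9 * M + 8 * M * ln M) / \<alpha>))"
    using assms by (subst ennreal_mult') (simp_all add: nn_integral_res_squared_majorant)
  finally have "ennreal \<alpha> * (\<integral>\<^sup>+\<beta>. ennreal (norm (R (Complex \<alpha> \<beta>) o\<^sub>L R (Complex \<alpha> \<beta>))) \<partial>lborel)
      \<le> ennreal \<alpha> * ennreal (2 * ((9 * M + 8 * M * ln M) / \<alpha>))"
    by (rule mult_left_mono) simp
  also have "\<dots> = ennreal (\<alpha> * (2 * ((9 * M + 8 * M * ln M) / \<alpha>)))"
    by (rule ennreal_mult'[symmetric]) (use \<alpha> in simp)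
  also have "\<alpha> * (2 * ((9 * M + 8 * M * ln M) / \<alpha>)) = 16 * M * ln M + 18 * M"
    using \<alpha> by (simp add: field_simps)
  finally show ?thesis .
qed

end

lemma bound_le_lemma4p7_constant:
  fixes M :: real
  assumes "1 \<le> M"
  shows "16 * M * ln M + 18 * M \<le> 4 * (2 * pi + 3 * ln 2) * M * (ln M + 1)"
proof -
  define K :: real where "K = 4 * (2 * pi + 3 * ln 2)"
  have "18 \<le> 8 * pi" using pi_gt3 by simp
  also have "8 * pi \<le> K" by (simp add: K_def)
  finally have "18 \<le> K" .
  have "16 * (M * ln M) \<le> K * (M * ln M)"
    using \<open>18 \<le> K\<close> assms by (intro mult_right_mono) auto
  moreover have "18 * M \<le> K * M"
    using \<open>18 \<le> K\<close> assms by (intro mult_right_mono) auto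
  moreover have "K * M * (ln M + 1) = K * (M * ln M) + K * M"
    by (simp add: algebra_simps)
  ultimately show ?thesis
    unfolding K_def[symmetric] by simp
qed

theorem lemma4p7:
  fixes J :: "'a::banach \<Rightarrow> 'a" and G :: "('a \<times> 'a) set" and \<alpha> :: real
  assumes "complex_structure J"
    and "sect_half_pi J G"
    and "\<alpha> > 0"
  shows "ennreal \<alpha> * (\<integral>\<^sup>+ \<beta>. ennreal (norm (res J G (Complex \<alpha> \<beta>) o\<^sub>L res J G (Complex \<alpha> \<beta>))) \<partial>lborel)
     \<le> ennreal (4 * (2 * pi + 3 * ln 2) * sect_const J G * (ln (sect_const J G) + 1))"
proof (cases "\<exists>x::'a. x \<noteq> 0")
  case True
  interpret half_plane_resolvent_estimate J G "sect_const J G"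
    using sect_half_pi_resolvent_estimate[OF assms(1,2)] .
  have "1 \<le> sect_const J G"
    using True M_ge_1 by blast
  then show ?thesis
    using weighted_integral_res_squared_le[OF assms(3)] bound_le_lemma4p7_constant
    by (meson ennreal_leI order_trans)
next
  case False
  then have "norm (res J G z o\<^sub>L res J G z) = 0" for z
    by (metis blinfun_eqI zero_blinfun.rep_eq norm_zero)
  then show ?thesis by simp
qed

end
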